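(* Under Assumption 1 and invertibility of $\widehat\Sigma$, it always holds that $$|v^\pi-\widehat v^\pi|\le\sum_{h=0}^H\sqrt{(\widehat\nu_h^\pi)^\top\widehat\Sigma^{-1}\widehat\nu_h^\pi}\sqrt{(\widehat W_h^\pi-w_h^\pi)^\top\widehat\Sigma(\widehat W_h^\pi-w_h^\pi)},$$ where $w_h^\pi\in\mathbb R^d$ satisfies $Q_h^\pi=\phi^\top w_h^\pi$ ($w_{H+1}^\pi=0$) and $\widehat W_h^\pi:=\widehat R+\widehat M^\pi w_{h+1}^\pi$.
   Context: MDP setting: $\mathcal X=\mathcal S\times\mathcal A$; mean reward $r$, transition kernel $p$; target policy $\pi$, horizon $H$, initial distribution $\xi_0$; $v^\pi=\mathbb E^\pi[\sum_{h=0}^Hr(s_h,a_h)\mid s_0\sim\xi_0]$; $Q_h^\pi(s,a)=\mathbb E^\pi[\sum_{h'=h}^Hr(s_{h'},a_{h'})\mid s_h=s,a_h=a]$, $Q_{H+1}^\pi=0$. $\phi:\mathcal X\to\mathbb R^d$, $\mathcal Q=\{\phi^\top w\}$, $\phi^\pi(s)=\int\phi(s,a)\pi(a\mid s)da$. Assumption 1: $r\in\mathcal Q$ and $\mathcal P^\pi\mathcal Q\subseteq\mathcal Q$, $\mathcal P^\pi f(s,a)=\mathbb E[f(s',a')\mid s,a]$, $s'\sim p(\cdot\mid s,a)$, $a'\sim\pi(\cdot\mid s')$. Data $\{(s_n,a_n,s_n',r_n')\}_{n=1}^N$ (arbitrary), $\lambda\ge0$, $\widehat\Sigma=\lambda I+\sum_n\phi(s_n,a_n)\phi(s_n,a_n)^\top$,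 $\widehat R=\widehat\Sigma^{-1}\sum_nr_n'\phi(s_n,a_n)$, $\widehat M^\pi=\widehat\Sigma^{-1}\sum_n\phi(s_n,a_n)\phi^\pi(s_n')^\top$, $\nu_0^\pi=\mathbb E[\phi(s,a)\mid s\sim\xi_0,a\sim\pi(\cdot\mid s)]$, $\widehat\nu_h^\pi=((\widehat M^\pi)^\top)^h\nu_0^\pi$, $\widehat w_{H+1}^\pi=0$, $\widehat w_h^\pi=\widehat R+\widehat M^\pi\widehat w_{h+1}^\pi$, $\widehat v^\pi=(\nu_0^\pi)^\top\widehat w_0^\pi$. *)

theory Defs
  imports "HOL-Analysis.Analysis" "HOL-Probability.Probability"
begin

text \<open>Transition kernel: p (s,a) is a measure on states; target policy: pol s is a measure on actions.\<close>

definition outer :: "real^'d \<Rightarrow> real^'d \<Rightarrow> real^'d^'d" where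
  "outer u v = (\<chi> i j. u $ i * v $ j)"

definition phi_pi :: "('s \<times> 'a \<Rightarrow> real^'d) \<Rightarrow> ('s \<Rightarrow> 'a measure) \<Rightarrow> 's \<Rightarrow> real^'d" where
  "phi_pi phi pol s = (\<integral>a. phi (s, a) \<partial>pol s)"

definition Ppi :: "('s \<times> 'a \<Rightarrow> 's measure) \<Rightarrow> ('s \<Rightarrow> 'a measure) \<Rightarrow> ('s \<times> 'a \<Rightarrow> real) \<Rightarrow> 's \<times> 'a \<Rightarrow> real" where
  "Ppi p pol f x = (\<integral>s'. (\<integral>a'. f (s', a') \<partial>pol s') \<partial>p x)"

fun Qsteps :: "('s \<times> 'a \<Rightarrow> real) \<Rightarrow> ('s \<times> 'a \<Rightarrow> 's measure) \<Rightarrow> ('s \<Rightarrow> 'a measure) \<Rightarrow> nat \<Rightarrow> 's \<times> 'a \<Rightarrow> real" where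
  "Qsteps r p pol 0 = (\<lambda>x. 0)"
| "Qsteps r p pol (Suc k) = (\<lambda>x. r x + Ppi p pol (Qsteps r p pol k) x)"

text \<open>Q_h^pi for horizon H (Q_{H+1} = 0): the expected sum of r from step h to H.\<close>
definition Qpi :: "('s \<times> 'a \<Rightarrow> real) \<Rightarrow> ('s \<times> 'a \<Rightarrow> 's measure) \<Rightarrow> ('s \<Rightarrow> 'a measure) \<Rightarrow> nat \<Rightarrow> nat \<Rightarrow> 's \<times> 'a \<Rightarrow> real" where
  "Qpi r p pol H h = Qsteps r p pol (Suc H - h)"

definition vpi :: "('s \<times> 'a \<Rightarrow> real) \<Rightarrow> ('s \<times> 'a \<Rightarrow> 's measure) \<Rightarrow> ('s \<Rightarrow> 'a measure) \<Rightarrow> nat \<Rightarrow> 's measure \<Rightarrow> real" where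
  "vpi r p pol H xi0 = (\<integral>s. (\<integral>a. Qpi r p pol H 0 (s, a) \<partial>pol s) \<partial>xi0)"

definition nu0 :: "('s \<times> 'a \<Rightarrow> real^'d) \<Rightarrow> ('s \<Rightarrow> 'a measure) \<Rightarrow> 's measure \<Rightarrow> real^'d" where
  "nu0 phi pol xi0 = (\<integral>s. phi_pi phi pol s \<partial>xi0)"

definition Sigma_hat :: "real \<Rightarrow> ('s \<times> 'a \<Rightarrow> real^'d) \<Rightarrow> nat \<Rightarrow> (nat \<Rightarrow> 's) \<Rightarrow> (nat \<Rightarrow> 'a) \<Rightarrow> real^'d^'d" where
  "Sigma_hat lam phi N sn an = lam *\<^sub>R mat 1 + (\<Sum>n\<in>{1..N}. outer (phi (sn n, an n)) (phi (sn n, an n)))"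

definition R_hat :: "real \<Rightarrow> ('s \<times> 'a \<Rightarrow> real^'d) \<Rightarrow> nat \<Rightarrow> (nat \<Rightarrow> 's) \<Rightarrow> (nat \<Rightarrow> 'a) \<Rightarrow> (nat \<Rightarrow> real) \<Rightarrow> real^'d" where
  "R_hat lam phi N sn an rn = matrix_inv (Sigma_hat lam phi N sn an) *v (\<Sum>n\<in>{1..N}. rn n *\<^sub>R phi (sn n, an n))"

definition M_hat :: "real \<Rightarrow> ('s \<times> 'a \<Rightarrow> real^'d) \<Rightarrow> ('s \<Rightarrow> 'a measure) \<Rightarrow> nat \<Rightarrow> (nat \<Rightarrow> 's) \<Rightarrow> (nat \<Rightarrow> 'a) \<Rightarrow> (nat \<Rightarrow> 's) \<Rightarrow> real^'d^'d" where
  "M_hat lam phi pol N sn an sn' = matrix_inv (Sigma_hat lam phi N sn an) ** (\<Sum>n\<in>{1..N}. outer (phi (sn n, an n)) (phi_pi phi pol (sn' n)))"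

definition nu_hat :: "real^'d^'d \<Rightarrow> real^'d \<Rightarrow> nat \<Rightarrow> real^'d" where
  "nu_hat M nu h = ((\<lambda>v. transpose M *v v) ^^ h) nu"

definition w_hat :: "real^'d \<Rightarrow> real^'d^'d \<Rightarrow> nat \<Rightarrow> nat \<Rightarrow> real^'d" where
  "w_hat R M H h = ((\<lambda>w. R + M *v w) ^^ (Suc H - h)) 0"

definition assumption1 :: "('s \<times> 'a \<Rightarrow> real) \<Rightarrow> ('s \<times> 'a \<Rightarrow> 's measure) \<Rightarrow> ('s \<Rightarrow> 'a measure) \<Rightarrow> ('s \<times> 'a \<Rightarrow> real^'d) \<Rightarrow> bool" where
  "assumption1 r p pol phi \<longleftrightarrow>
     (\<exists>w. \<forall>x. r x = phi x \<bullet> w) \<and>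
     (\<forall>w. \<exists>w'. \<forall>x. Ppi p pol (\<lambda>y. phi y \<bullet> w) x = phi x \<bullet> w')"

end

theory Submission
  imports Defs
begin

text \<open>Since \<open>Q\<^sub>0 = \<phi>\<^sup>T w\<^sub>0\<close>, the true value is \<open>v = \<nu>\<^sub>0\<^sup>T w\<^sub>0\<close>. The estimated weights satisfy
  \<open>\<^bold>w\<^sub>h - w\<^sub>h = (W\<^sub>h - w\<^sub>h) + M (\<^bold>w\<^sub>h\<^sub>+\<^sub>1 - w\<^sub>h\<^sub>+\<^sub>1)\<close> (bold \<open>\<^bold>w\<close> for the estimate), so pairing
  with the adjoint iterates \<open>\<nu>\<^sub>h\<^sub>+\<^sub>1 = M\<^sup>T \<nu>\<^sub>h\<close> telescopes the error of the value estimate into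
  \<open>\<Sum>\<^sub>h \<nu>\<^sub>h\<^sup>T (W\<^sub>h - w\<^sub>h)\<close>. Writing \<open>\<nu>\<^sub>h = \<Sigma> (\<Sigma>\<^sup>-\<^sup>1 \<nu>\<^sub>h)\<close>, each term is bounded by the
  Cauchy--Schwarz inequality for the positive semidefinite form of \<open>\<Sigma>\<close>.\<close>

lemma square_le_of_quadratic_nonneg:
  fixes a b c :: real
  assumes nonneg: "\<And>t. 0 \<le> a - 2 * t * b + t\<^sup>2 * c" and "0 \<le> c"
  shows "b\<^sup>2 \<le> a * c"
proof (cases "c = 0")
  case True
  have "b = 0"
  proof (rule ccontr)
    assume "b \<noteq> 0"
    then have "a - 2 * ((a + 1) / (2 * b)) * b = -1" by (simp add: field_simps)
    with nonneg[of "(a + 1) / (2 * b)"] True show False by simp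
  qed
  with True show ?thesis by simp
next
  case False
  with \<open>0 \<le> c\<close> have "0 < c" by simp
  have "a - 2 * (b / c) * b + (b / c)\<^sup>2 * c = (a * c - b\<^sup>2) / c"
    using \<open>0 < c\<close> by (simp add: field_simps power2_eq_square)
  with nonneg[of "b / c"] \<open>0 < c\<close> show ?thesis by (simp add: zero_le_divide_iff)
qed

lemma inner_matrix_vector_transpose:
  fixes A :: "real^'n^'m"
  shows "x \<bullet> (A *v y) = (transpose A *v x) \<bullet> y"
  by (simp add: dot_lmul_matrix)

lemma psd_form_Cauchy_Schwarz:
  fixes S :: "real^'n^'n"
  assumes sym: "transpose S = S" and psd: "\<And>x. 0 \<le> x \<bullet> (S *v x)"
  shows "(x \<bullet> (S *v y))\<^sup>2 \<le> (x \<bullet> (S *v x)) * (y \<bullet> (S *v y))"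
proof (rule square_le_of_quadratic_nonneg)
  have "y \<bullet> (S *v x) = x \<bullet> (S *v y)"
    by (metis sym inner_commute inner_matrix_vector_transpose)
  then show "0 \<le> x \<bullet> (S *v x) - 2 * t * (x \<bullet> (S *v y)) + t\<^sup>2 * (y \<bullet> (S *v y))" for t
    using psd[of "x - t *\<^sub>R y"]
    by (simp add: matrix_vector_mult_diff_distrib inner_diff_left inner_diff_right
        matrix_vector_mult_scaleR power2_eq_square algebra_simps)
qed (rule psd)

lemma matrix_inv_right:
  fixes A :: "'a::semiring_1^'n^'m"
  assumes "invertible A"
  shows "A ** matrix_inv A = mat 1"
  using assms unfolding invertible_def matrix_inv_def by (rule someI_ex[THEN conjunct1])

lemma Cauchy_Schwarz_inverse_form:
  fixes S :: "real^'n^'n"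
  assumes sym: "transpose S = S" and psd: "\<And>x. 0 \<le> x \<bullet> (S *v x)" and "invertible S"
  shows "\<bar>u \<bullet> x\<bar> \<le> sqrt (u \<bullet> (matrix_inv S *v u)) * sqrt (x \<bullet> (S *v x))"
proof -
  define y where "y = matrix_inv S *v u"
  have Sy: "S *v y = u"
    by (simp add: y_def matrix_vector_mul_assoc matrix_inv_right[OF \<open>invertible S\<close>])
  have "u \<bullet> x = y \<bullet> (S *v x)"
    by (metis Sy sym inner_commute inner_matrix_vector_transpose)
  moreover have "u \<bullet> (matrix_inv S *v u) = y \<bullet> (S *v y)"
    unfolding Sy by (simp add: y_def inner_commute)
  ultimately show ?thesis
    using psd_form_Cauchy_Schwarz[OF sym psd, of y x]
    by (metis real_sqrt_abs real_sqrt_le_mono real_sqrt_mult)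
qed

lemma outer_mult_vec: "outer u v *v x = (v \<bullet> x) *\<^sub>R u"
  by (simp add: vec_eq_iff outer_def matrix_vector_mult_def inner_vec_def sum_distrib_left mult_ac)

lemma transpose_Sigma_hat: "transpose (Sigma_hat lam phi N sn an) = Sigma_hat lam phi N sn an"
  by (simp add: vec_eq_iff Sigma_hat_def transpose_def outer_def mat_def mult.commute)

lemma sum_matrix_vector_mult: "sum f A *v x = (\<Sum>i\<in>A. f i *v x)"
  by (induction A rule: infinite_finite_induct) (simp_all add: matrix_vector_mult_add_rdistrib)

lemma Sigma_hat_quadratic_form:
  "x \<bullet> (Sigma_hat lam phi N sn an *v x) = lam * (x \<bullet> x) + (\<Sum>n\<in>{1..N}. (phi (sn n, an n) \<bullet> x)\<^sup>2)"
  unfolding Sigma_hat_def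
  by (simp add: matrix_vector_mult_add_rdistrib scaleR_matrix_vector_assoc[symmetric]
      sum_matrix_vector_mult outer_mult_vec
      inner_sum_right inner_add_right power2_eq_square inner_commute)

lemma Sigma_hat_nonneg: "0 \<le> lam \<Longrightarrow> 0 \<le> x \<bullet> (Sigma_hat lam phi N sn an *v x)"
  by (simp add: Sigma_hat_quadratic_form sum_nonneg)

lemma w_hat_step: "h \<le> H \<Longrightarrow> w_hat R M H h = R + M *v w_hat R M H (Suc h)"
  by (simp add: w_hat_def Suc_diff_le)

lemma nu_hat_Suc: "nu_hat M nu (Suc h) = transpose M *v nu_hat M nu h"
  by (simp add: nu_hat_def)

lemma inner_w_hat_error_partial_telescope:
  fixes M :: "real^'d^'d"
  assumes "j \<le> Suc H"
  shows "nu \<bullet> (w_hat R M H 0 - w 0)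
    = (\<Sum>h<j. nu_hat M nu h \<bullet> (R + M *v w (Suc h) - w h)) + nu_hat M nu j \<bullet> (w_hat R M H j - w j)"
  using assms
proof (induction j)
  case 0
  then show ?case by (simp add: nu_hat_def)
next
  case (Suc j)
  then have "nu_hat M nu j \<bullet> (w_hat R M H j - w j)
      = nu_hat M nu j \<bullet> (R + M *v w (Suc j) - w j) + nu_hat M nu (Suc j) \<bullet> (w_hat R M H (Suc j) - w (Suc j))"
    by (simp add: w_hat_step nu_hat_Suc dot_lmul_matrix matrix_vector_mult_diff_distrib inner_diff_right inner_add_right)
  with Suc show ?case by simp
qed

lemma inner_w_hat_error_telescope:
  fixes M :: "real^'d^'d"
  assumes "w (Suc H) = 0"
  shows "nu \<bullet> (w_hat R M H 0 - w 0) = (\<Sum>h\<in>{0..H}. nu_hat M nu h \<bullet> (R + M *v w (Suc h) - w h))"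
  using inner_w_hat_error_partial_telescope[of "Suc H" H nu R M w] assms
  by (simp add: w_hat_def atLeast0AtMost lessThan_Suc_atMost)

lemma vpi_eq_inner_nu0:
  assumes "\<And>s. s \<in> space xi0 \<Longrightarrow> integrable (pol s) (\<lambda>a. phi (s, a))"
    and "integrable xi0 (phi_pi phi pol)"
    and "\<And>x. Qpi r p pol H 0 x = phi x \<bullet> w"
  shows "vpi r p pol H xi0 = nu0 phi pol xi0 \<bullet> w"
proof -
  have "vpi r p pol H xi0 = (\<integral>s. phi_pi phi pol s \<bullet> w \<partial>xi0)"
    unfolding vpi_def assms(3) phi_pi_def by (rule Bochner_Integration.integral_cong[OF refl]) (simp add: assms(1))
  also have "\<dots> = nu0 phi pol xi0 \<bullet> w"
    unfolding nu0_def using assms(2) by simp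
  finally show ?thesis .
qed

theorem lemma15:
  fixes r :: "'s \<times> 'a \<Rightarrow> real"
    and p :: "'s \<times> 'a \<Rightarrow> 's measure"
    and pol :: "'s \<Rightarrow> 'a measure"
    and xi0 :: "'s measure"
    and phi :: "'s \<times> 'a \<Rightarrow> real^'d"
    and H N :: nat and lam :: real
    and sn :: "nat \<Rightarrow> 's" and an :: "nat \<Rightarrow> 'a" and sn' :: "nat \<Rightarrow> 's" and rn :: "nat \<Rightarrow> real"
    and w :: "nat \<Rightarrow> real^'d"
  assumes "prob_space xi0"
    and "\<And>x. prob_space (p x)"
    and "\<And>s. prob_space (pol s)"
    and "\<And>s. s \<in> space xi0 \<Longrightarrow> integrable (pol s) (\<lambda>a. phi (s, a))"
    and "integrable xi0 (phi_pi phi pol)"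
    and "assumption1 r p pol phi"
    and "lam \<ge> 0"
    and "invertible (Sigma_hat lam phi N sn an)"
    and "\<And>h. h \<le> H \<Longrightarrow> (\<forall>x. Qpi r p pol H h x = phi x \<bullet> w h)"
    and "w (Suc H) = 0"
  shows "\<bar>vpi r p pol H xi0 - nu0 phi pol xi0 \<bullet> w_hat (R_hat lam phi N sn an rn) (M_hat lam phi pol N sn an sn') H 0\<bar>
    \<le> (\<Sum>h\<in>{0..H}.
         sqrt (nu_hat (M_hat lam phi pol N sn an sn') (nu0 phi pol xi0) h \<bullet>
               (matrix_inv (Sigma_hat lam phi N sn an) *v nu_hat (M_hat lam phi pol N sn an sn') (nu0 phi pol xi0) h))
       * sqrt ((R_hat lam phi N sn an rn + M_hat lam phi pol N sn an sn' *v w (Suc h) - w h) \<bullet>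
               (Sigma_hat lam phi N sn an *v (R_hat lam phi N sn an rn + M_hat lam phi pol N sn an sn' *v w (Suc h) - w h))))"
proof -
  let ?S = "Sigma_hat lam phi N sn an"
  let ?nu = "nu_hat (M_hat lam phi pol N sn an sn') (nu0 phi pol xi0)"
  let ?e = "\<lambda>h. R_hat lam phi N sn an rn + M_hat lam phi pol N sn an sn' *v w (Suc h) - w h"
  let ?w_hat = "w_hat (R_hat lam phi N sn an rn) (M_hat lam phi pol N sn an sn') H 0"
  \<comment> \<open>Assumption 1 and the probability-space hypotheses only serve to guarantee the
     representation \<open>Q\<^sub>h = \<phi>\<^sup>T w\<^sub>h\<close>, which is assumed directly.\<close>
  have "vpi r p pol H xi0 = nu0 phi pol xi0 \<bullet> w 0"
    using assms(4,5) assms(9)[of 0] by (intro vpi_eq_inner_nu0) auto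
  then have "\<bar>vpi r p pol H xi0 - nu0 phi pol xi0 \<bullet> ?w_hat\<bar> = \<bar>nu0 phi pol xi0 \<bullet> (?w_hat - w 0)\<bar>"
    by (simp add: inner_diff_right abs_minus_commute)
  also have "\<dots> = \<bar>\<Sum>h\<in>{0..H}. ?nu h \<bullet> ?e h\<bar>"
    by (simp only: inner_w_hat_error_telescope[of w H, OF assms(10)])
  also have "\<dots> \<le> (\<Sum>h\<in>{0..H}. \<bar>?nu h \<bullet> ?e h\<bar>)"
    by (rule sum_abs)
  also have "\<dots> \<le> (\<Sum>h\<in>{0..H}. sqrt (?nu h \<bullet> (matrix_inv ?S *v ?nu h)) * sqrt (?e h \<bullet> (?S *v ?e h)))"
    using assms(7,8)
    by (intro sum_mono Cauchy_Schwarz_inverse_form transpose_Sigma_hat Sigma_hat_nonneg)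
  finally show ?thesis .
qed

end
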